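(* Let $p$ be an odd prime and $r\ge2$ even. Then $D_{S(p^r)^*}\le5$.
   Context: For a natural number $m$, $\mathbb Z_m=\mathbb Z/m\mathbb Z$, $S(m)=\{x^2:x\in\mathbb Z_m\}$, $S(m)^*=S(m)\setminus\{0\}$. For $A\subseteq\mathbb Z_m$, a sequence $(y_1,\dots,y_t)$ ($t\ge1$) is an $A$-weighted zero-sum sequence if there exist $a_i\in A$ with $\sum a_iy_i=0$; a sequence has an $A$-weighted zero-sum subsequence if some nonempty subsequence is one. $D_A(m)$ is the least positive integer $t$ such that every sequence of length $t$ in $\mathbb Z_m$ has an $A$-weighted zero-sum subsequence; $D_{S(m)^*}=D_{S(m)^*}(m)$. *)

theory Defs
  imports "HOL-Computational_Algebra.Primes"
begin

text \<open>Z_m is represented by the residues {0..<m} (natural numbers), arithmetic mod m.\<close>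

definition sq_set :: "nat \<Rightarrow> nat set" where
  "sq_set m = {(x * x) mod m | x. x < m}"

definition sq_set_star :: "nat \<Rightarrow> nat set" where
  "sq_set_star m = sq_set m - {0}"

definition has_wzs_subseq :: "nat set \<Rightarrow> nat \<Rightarrow> nat list \<Rightarrow> bool" where
  "has_wzs_subseq A m ys \<longleftrightarrow>
     (\<exists>I a. I \<subseteq> {..<length ys} \<and> I \<noteq> {} \<and> (\<forall>i\<in>I. a i \<in> A) \<and>
            (\<Sum>i\<in>I. a i * ys ! i) mod m = 0)"

definition davenport_w :: "nat set \<Rightarrow> nat \<Rightarrow> nat" where
  "davenport_w A m = (LEAST t. t \<ge> 1 \<and>
     (\<forall>ys. length ys = t \<and> set ys \<subseteq> {..<m} \<longrightarrow> has_wzs_subseq A m ys))"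

end

theory Submission
  imports Defs "HOL-Number_Theory.Cong"
begin

text \<open>
  Write each nonzero term of the sequence as y = p^v u with p \<nmid> u and v < r. Among five terms
  three have valuations of the same parity. For their units u_i, u_j, u_k the congruence
  u_i x^2 + u_j y^2 + u_k \<equiv> 0 (mod p) is solvable by pigeonhole on the (p+1)/2 square classes,
  and Hensel's lemma (p odd) lifts it to a solution mod p^r in which the surviving coefficients
  are units. If V is the largest of the valuations, weighting y_l by the nonzero square
  (p^((V - v_l)/2) c_l)^2 turns the weighted sum into p^V times that solution, hence 0 mod p^r.
\<close>

lemma hensel_lift_square_step:
  fixes p a b x K :: nat
  assumes p: "prime p" "odd p" and "\<not> p dvd a" "\<not> p dvd x" "K \<ge> 1"
    and "p^K dvd a*x^2 + b"
  shows "\<exists>x'. \<not> p dvd x' \<and> p^Suc K dvd a*x'^2 + b"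
proof -
  obtain q where q: "a*x^2 + b = p^K * q" using assms(6) by blast
  have "\<not> p dvd 2"
    using p by (metis primes_dvd_imp_eq two_is_prime_nat even_numeral)
  then have "\<not> p dvd 2*a*x"
    using assms(3,4) p by (simp add: prime_dvd_mult_iff)
  then have "coprime (2*a*x) p"
    using p(1) by (metis coprime_commute prime_imp_coprime)
  then obtain c where c: "[2*a*x*c = 1] (mod p)"
    using coprime_iff_invertible_nat[of "2*a*x" p] by auto
  define s where "s = c * (p - q mod p)"
  define x' where "x' = x + p^K * s"
  have "p dvd p^K"
    using \<open>K \<ge> 1\<close> by (simp add: dvd_power)
  then obtain k where k: "p^K = p*k" ..
  have "[x' = x] (mod p)"
    unfolding x'_def cong_def k by (simp add: mult.assoc)
  then have "\<not> p dvd x'"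
    using assms(4) by (metis cong_dvd_iff)
  \<comment> \<open>the correction s is chosen so that 2 a x s \<equiv> -q (mod p)\<close>
  have "[q + 2*a*x*s = q + 2*a*x*c*(p - q mod p)] (mod p)"
    by (simp add: s_def mult.assoc)
  also have "[q + 2*a*x*c*(p - q mod p) = q + 1*(p - q mod p)] (mod p)"
    by (intro cong_add cong_mult c cong_refl)
  also have "q + 1*(p - q mod p) = q div p * p + p"
    using div_mult_mod_eq[of q p] mod_less_divisor[of p q] prime_gt_0_nat[OF p(1)] by linarith
  finally have "[q + 2*a*x*s = 0] (mod p)"
    by (simp add: cong_def)
  then obtain w where w: "q + 2*a*x*s = p*w"
    unfolding cong_0_iff by (elim dvdE)
  have "K + K = Suc K + (K - 1)"
    using \<open>K \<ge> 1\<close> by simp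
  then have pKK: "p^K * p^K = p^Suc K * p^(K - 1)"
    by (metis power_add)
  have "a*x'^2 + b = (a*x^2 + b) + p^K * (2*a*x*s) + (p^K * p^K) * (a*s^2)"
    unfolding x'_def by (simp add: power2_eq_square algebra_simps)
  also have "\<dots> = p^K * (q + 2*a*x*s) + (p^K * p^K) * (a*s^2)"
    unfolding q by (simp add: algebra_simps)
  also have "\<dots> = p^Suc K * (w + p^(K - 1) * (a*s^2))"
    unfolding w pKK by (simp add: algebra_simps)
  finally show ?thesis
    using \<open>\<not> p dvd x'\<close> by auto
qed

lemma hensel_lift_square:
  fixes p a b x K :: nat
  assumes p: "prime p" "odd p" and a: "\<not> p dvd a" and "\<not> p dvd x"
    and "p dvd a*x^2 + b" and "K \<ge> 1"
  shows "\<exists>x'. \<not> p dvd x' \<and> p^K dvd a*x'^2 + b"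
  using \<open>K \<ge> 1\<close>
proof (induction K rule: dec_induct)
  case base
  then show ?case using assms(4,5) by auto
next
  case (step K)
  then show ?case using hensel_lift_square_step[OF p a] by blast
qed

lemma eq_if_cong_mult_square:
  fixes p c x y :: nat
  assumes p: "prime p" and c: "\<not> p dvd c" and xy: "x + y < p"
    and cong: "[c*x^2 = c*y^2] (mod p)"
  shows "x = y"
proof -
  have "[int (c*x^2) = int (c*y^2)] (mod int p)"
    using cong cong_int_iff by blast
  then have "int p dvd int c * ((int x - int y) * (int x + int y))"
    by (simp add: cong_iff_dvd_diff power2_eq_square algebra_simps)
  moreover have "prime (int p)" "\<not> int p dvd int c"
    using p c by simp_all
  ultimately have "int p dvd int x - int y \<or> int p dvd int x + int y"
    by (simp add: prime_dvd_mult_iff)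
  then show ?thesis
  proof
    assume "int p dvd int x - int y"
    then have "[x = y] (mod p)"
      by (simp add: cong_iff_dvd_diff flip: cong_int_iff)
    then show ?thesis
      using xy unfolding cong_def by simp
  next
    assume "int p dvd int x + int y"
    then have "p dvd x + y"
      by (metis of_nat_add of_nat_dvd_iff)
    then show ?thesis
      using xy by (metis add_is_0 dvd_imp_le not_le neq0_conv)
  qed
qed

lemma complement_mod_inj:
  fixes p u u' :: nat
  assumes "u < p" "u' < p" and "(p - u) mod p = (p - u') mod p"
  shows "u = u'"
  using assms by (cases "u = 0"; cases "u' = 0") auto

lemma dvd_add_if_mod_eq_complement:
  fixes p a b :: nat
  assumes "p > 0" and "a mod p = (p - b mod p) mod p"
  shows "p dvd a + b"
proof (cases "b mod p = 0")
  case True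
  then show ?thesis
    using assms by (auto simp: mod_add_eq[symmetric])
next
  case False
  have "(a + b) mod p = (p - b mod p + b mod p) mod p"
    using assms(2) by (metis mod_add_eq mod_mod_trivial)
  also have "\<dots> = 0"
    using \<open>p > 0\<close> by (simp add: less_imp_le)
  finally show ?thesis
    by (rule mod_0_imp_dvd)
qed

lemma exists_prime_dvd_diagonal_quadratic:
  fixes p a b c :: nat
  assumes p: "prime p" "odd p" and a: "\<not> p dvd a" and b: "\<not> p dvd b"
  shows "\<exists>x y. p dvd a*x^2 + (b*y^2 + c)"
proof -
  define h where "h = (p - 1) div 2"
  have "p > 0"
    using p(1) prime_gt_0_nat by blast
  have ph: "p = 2*h + 1"
    using p(2) unfolding h_def by (auto elim!: oddE)
  have small: "x + y < p" if "x \<le> h" "y \<le> h" for x y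
    using that ph by linarith
  \<comment> \<open>the h+1 distinct residues of a x^2 and of -(b y^2 + c) cannot be disjoint, as 2(h+1) > p\<close>
  define f where "f x = (a*x^2) mod p" for x
  define g where "g y = (p - (b*y^2 + c) mod p) mod p" for y
  have "inj_on f {..h}"
  proof (rule inj_onI)
    fix x y assume "x \<in> {..h}" "y \<in> {..h}" "f x = f y"
    then show "x = y"
      using eq_if_cong_mult_square[OF p(1) a] small unfolding f_def cong_def by auto
  qed
  moreover have "inj_on g {..h}"
  proof (rule inj_onI)
    fix x y assume xy: "x \<in> {..h}" "y \<in> {..h}" and "g x = g y"
    then have "(b*x^2 + c) mod p = (b*y^2 + c) mod p"
      using complement_mod_inj[OF mod_less_divisor mod_less_divisor] \<open>p > 0\<close>
      unfolding g_def by blast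
    then have "[b*x^2 = b*y^2] (mod p)"
      by (metis cong_def cong_add_rcancel_nat)
    then show "x = y"
      using eq_if_cong_mult_square[OF p(1) b] small xy by auto
  qed
  ultimately have "card (f ` {..h}) + card (g ` {..h}) = p + 1"
    using ph by (simp add: card_image)
  moreover have "f ` {..h} \<union> g ` {..h} \<subseteq> {..<p}"
    using \<open>p > 0\<close> unfolding f_def g_def by auto
  then have "card (f ` {..h} \<union> g ` {..h}) \<le> p"
    using card_mono[of "{..<p}"] by fastforce
  ultimately have "f ` {..h} \<inter> g ` {..h} \<noteq> {}"
    using card_Un_Int[of "f ` {..h}" "g ` {..h}"] by auto
  then obtain x y where "f x = g y"
    by auto
  then show ?thesis
    using dvd_add_if_mod_eq_complement \<open>p > 0\<close> unfolding f_def g_def by blast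
qed

lemma lift_square_combination:
  fixes p r k :: nat and u c :: "nat \<Rightarrow> nat"
  assumes p: "prime p" "odd p" and "r \<ge> 1" and "finite I" "k \<in> I" "\<not> p dvd u k"
    and c: "\<forall>i\<in>I. \<not> p dvd c i" and "p dvd (\<Sum>i\<in>I. c i^2 * u i)"
  shows "\<exists>c'. (\<forall>i\<in>I. \<not> p dvd c' i) \<and> p^r dvd (\<Sum>i\<in>I. c' i^2 * u i)"
proof -
  define b where "b = (\<Sum>i\<in>I - {k}. c i^2 * u i)"
  have split: "(\<Sum>i\<in>I. d i^2 * u i) = u k * d k^2 + (\<Sum>i\<in>I - {k}. d i^2 * u i)" for d
    using \<open>finite I\<close> \<open>k \<in> I\<close> by (simp add: sum.remove mult.commute)
  obtain x where x: "\<not> p dvd x" "p^r dvd u k * x^2 + b"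
    using hensel_lift_square[OF p \<open>\<not> p dvd u k\<close>, of "c k" b r] c assms(5,8,3) split[of c]
    unfolding b_def by auto
  define c' where "c' = c(k := x)"
  have "(\<Sum>i\<in>I - {k}. c' i^2 * u i) = b"
    unfolding b_def c'_def by (rule sum.cong) auto
  then have "p^r dvd (\<Sum>i\<in>I. c' i^2 * u i)"
    using split[of c'] x(2) unfolding c'_def by simp
  moreover have "\<forall>i\<in>I. \<not> p dvd c' i"
    using c x(1) unfolding c'_def by simp
  ultimately show ?thesis
    by blast
qed

lemma square_mod_mem_sq_set:
  fixes m x :: nat
  assumes "m > 0"
  shows "(x*x) mod m \<in> sq_set m"
  unfolding sq_set_def using assms
  by (intro CollectI exI[of _ "x mod m"]) (simp add: mod_mult_eq)

lemma one_mem_sq_set_star: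
  fixes m :: nat
  assumes "1 < m"
  shows "1 \<in> sq_set_star m"
  using square_mod_mem_sq_set[of m 1] assms unfolding sq_set_star_def by simp

lemma prime_power_square_mod_mem_sq_set_star:
  fixes p e r c :: nat
  assumes p: "prime p" and c: "\<not> p dvd c" and "2*e < r"
  shows "(p^e * c)^2 mod p^r \<in> sq_set_star (p^r)"
proof -
  have "(p^e * c)^2 mod p^r \<in> sq_set (p^r)"
    using square_mod_mem_sq_set[of "p^r"] prime_gt_0_nat[OF p] by (simp add: power2_eq_square)
  moreover have "\<not> p^r dvd (p^e * c)^2"
  proof
    assume "p^r dvd (p^e * c)^2"
    then have "p^r dvd p^(2*e) * c^2"
      by (simp add: power_mult_distrib power_mult[symmetric] mult.commute)
    moreover have "coprime (p^r) (c^2)"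
      using p c by (simp add: prime_imp_coprime)
    ultimately have "p^r dvd p^(2*e)"
      by (simp add: coprime_dvd_mult_left_iff)
    then show False
      using \<open>2*e < r\<close> prime_gt_1_nat[OF p] power_dvd_imp_le by fastforce
  qed
  ultimately show ?thesis
    unfolding sq_set_star_def by (auto simp: mod_eq_0_iff_dvd)
qed

lemma has_wzs_subseq_of_square_combination:
  fixes p r :: nat and ys :: "nat list" and v u c :: "nat \<Rightarrow> nat"
  assumes p: "prime p" and I: "I \<subseteq> {..<length ys}" "I \<noteq> {}"
    and ys: "\<forall>i\<in>I. ys!i = p^v i * u i \<and> v i < r \<and> \<not> p dvd c i"
    and par: "\<forall>i\<in>I. \<forall>j\<in>I. even (v i) = even (v j)"
    and sum: "p^r dvd (\<Sum>i\<in>I. c i^2 * u i)"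
  shows "has_wzs_subseq (sq_set_star (p^r)) (p^r) ys"
proof -
  have "finite I"
    using I(1) finite_subset by blast
  define V where "V = Max (v ` I)"
  have "V \<in> v ` I"
    unfolding V_def using \<open>finite I\<close> I(2) by simp
  then obtain i0 where "i0 \<in> I" "V = v i0"
    by blast
  then have "V < r"
    using ys by blast
  have Vpar: "\<forall>i\<in>I. even (v i) = even V"
    using par \<open>i0 \<in> I\<close> unfolding \<open>V = v i0\<close> by blast
  \<comment> \<open>weighting y_i = p^(v i) u i by (p^(e i) c i)^2, with 2 e i = V - v i, makes every term p^V c i^2 u i\<close>
  define e where "e i = (V - v i) div 2" for i
  define a where "a i = (p^e i * c i)^2 mod p^r" for i
  have ev: "e i + e i + v i = V" if i: "i \<in> I" for i
  proof -
    have "v i \<le> V"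
      unfolding V_def using \<open>finite I\<close> i by simp
    moreover have "even (V - v i)"
      using Vpar i \<open>v i \<le> V\<close> by auto
    then obtain k where "V - v i = 2*k"
      by (rule evenE)
    ultimately show ?thesis
      unfolding e_def by simp
  qed
  have "a i \<in> sq_set_star (p^r)" if "i \<in> I" for i
    unfolding a_def using prime_power_square_mod_mem_sq_set_star[OF p] ys ev[OF that] \<open>V < r\<close> that
    by simp
  moreover have "(\<Sum>i\<in>I. a i * ys!i) mod p^r = 0"
  proof -
    have "[(\<Sum>i\<in>I. a i * ys!i) = (\<Sum>i\<in>I. (p^e i * c i)^2 * ys!i)] (mod p^r)"
      unfolding a_def by (rule cong_sum, rule cong_mult) (simp_all add: cong_def)
    also have "(\<Sum>i\<in>I. (p^e i * c i)^2 * ys!i) = (\<Sum>i\<in>I. p^V * (c i^2 * u i))"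
    proof (rule sum.cong)
      fix i assume "i \<in> I"
      then have "ys!i = p^v i * u i"
        using ys by blast
      then show "(p^e i * c i)^2 * ys!i = p^V * (c i^2 * u i)"
        unfolding ev[OF \<open>i \<in> I\<close>, symmetric] power_add by (simp add: power2_eq_square ac_simps)
    qed simp
    finally show ?thesis
      using sum by (simp add: cong_def flip: sum_distrib_left)
  qed
  ultimately show ?thesis
    unfolding has_wzs_subseq_def using I by (intro exI[of _ I] exI[of _ a]) simp
qed

lemma has_wzs_subseq_of_three_same_parity:
  fixes p r :: nat and ys :: "nat list" and v u :: "nat \<Rightarrow> nat"
  assumes p: "prime p" "odd p" and "r \<ge> 1" and T: "T \<subseteq> {..<length ys}" "card T = 3"
    and ys: "\<forall>i\<in>T. ys!i = p^v i * u i \<and> v i < r \<and> \<not> p dvd u i"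
    and par: "\<forall>i\<in>T. \<forall>j\<in>T. even (v i) = even (v j)"
  shows "has_wzs_subseq (sq_set_star (p^r)) (p^r) ys"
proof -
  obtain i j k where T_eq: "T = {i, j, k}" and "i \<noteq> j" "j \<noteq> k" "i \<noteq> k"
    using T(2) unfolding card_3_iff by blast
  have "\<not> p dvd u i" "\<not> p dvd u j"
    using ys unfolding T_eq by simp_all
  then obtain x y where xy: "p dvd u i * x^2 + (u j * y^2 + u k)"
    using exists_prime_dvd_diagonal_quadratic[OF p] by blast
  define c where "c l = (if l = i then x else if l = j then y else 1)" for l
  \<comment> \<open>dropping the terms with p | c l does not change the sum mod p, and the term of k survives\<close>
  define I where "I = {l \<in> T. \<not> p dvd c l}"
  have "k \<in> I"
    unfolding I_def c_def using T_eq \<open>i \<noteq> k\<close> \<open>j \<noteq> k\<close> prime_gt_1_nat[OF p(1)] by simp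
  have "I \<subseteq> T" "finite T"
    unfolding I_def T_eq by auto
  have "u i * x^2 + (u j * y^2 + u k) = (\<Sum>l\<in>T. c l^2 * u l)"
    unfolding T_eq c_def using \<open>i \<noteq> j\<close> \<open>j \<noteq> k\<close> \<open>i \<noteq> k\<close> by (simp add: ac_simps)
  also have "\<dots> = (\<Sum>l\<in>T - I. c l^2 * u l) + (\<Sum>l\<in>I. c l^2 * u l)"
    using \<open>I \<subseteq> T\<close> \<open>finite T\<close> by (rule sum.subset_diff)
  finally have "p dvd (\<Sum>l\<in>T - I. c l^2 * u l) + (\<Sum>l\<in>I. c l^2 * u l)"
    using xy by simp
  moreover have "p dvd (\<Sum>l\<in>T - I. c l^2 * u l)"
    by (rule dvd_sum) (auto simp: I_def power2_eq_square)
  ultimately have "p dvd (\<Sum>l\<in>I. c l^2 * u l)"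
    by (simp add: dvd_add_right_iff)
  moreover have "finite I" "\<not> p dvd u k" "\<forall>l\<in>I. \<not> p dvd c l"
    using \<open>I \<subseteq> T\<close> \<open>finite T\<close> ys T_eq unfolding I_def by (auto intro: finite_subset)
  ultimately obtain c' where c': "\<forall>l\<in>I. \<not> p dvd c' l" "p^r dvd (\<Sum>l\<in>I. c' l^2 * u l)"
    using lift_square_combination[OF p \<open>r \<ge> 1\<close> _ \<open>k \<in> I\<close>] by blast
  show ?thesis
  proof (rule has_wzs_subseq_of_square_combination[OF p(1) _ _ _ _ c'(2)])
    show "I \<subseteq> {..<length ys}" "I \<noteq> {}"
      using \<open>I \<subseteq> T\<close> T(1) \<open>k \<in> I\<close> by auto
    show "\<forall>l\<in>I. ys!l = p^v l * u l \<and> v l < r \<and> \<not> p dvd c' l"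
      using c'(1) ys \<open>I \<subseteq> T\<close> by blast
    show "\<forall>l\<in>I. \<forall>l'\<in>I. even (v l) = even (v l')"
      using par \<open>I \<subseteq> T\<close> by blast
  qed
qed

lemma obtain_three_same_parity:
  fixes S :: "'a set" and f :: "'a \<Rightarrow> nat"
  assumes "finite S" "card S \<ge> 5"
  obtains T where "T \<subseteq> S" "card T = 3" "\<forall>x\<in>T. \<forall>y\<in>T. even (f x) = even (f y)"
proof -
  define Ev where "Ev = {x \<in> S. even (f x)}"
  define Od where "Od = {x \<in> S. odd (f x)}"
  have "S = Ev \<union> Od" "Ev \<inter> Od = {}"
    unfolding Ev_def Od_def by auto
  then have "card Ev + card Od = card S"
    using \<open>finite S\<close> by (metis card_Un_disjoint finite_Un)
  then have "3 \<le> card Ev \<or> 3 \<le> card Od"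
    using \<open>card S \<ge> 5\<close> by linarith
  then show ?thesis
  proof
    assume "3 \<le> card Ev"
    then obtain T where "T \<subseteq> Ev" "card T = 3"
      by (rule obtain_subset_with_card_n)
    then show ?thesis
      using that unfolding Ev_def by blast
  next
    assume "3 \<le> card Od"
    then obtain T where "T \<subseteq> Od" "card T = 3"
      by (rule obtain_subset_with_card_n)
    then show ?thesis
      using that unfolding Od_def by blast
  qed
qed

lemma multiplicity_less_if_less_power:
  fixes p y r :: nat
  assumes "prime p" "0 < y" "y < p^r"
  shows "multiplicity p y < r"
proof (rule multiplicity_lessI)
  show "\<not> p^r dvd y"
    using assms(2,3) by (auto dest: dvd_imp_le)
qed (use assms prime_gt_1_nat in auto)

lemma has_wzs_subseq_if_zero_mem:
  assumes "A \<noteq> {}" and "0 \<in> set ys"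
  shows "has_wzs_subseq A m ys"
proof -
  obtain a where "a \<in> A"
    using assms(1) by blast
  obtain i where "i < length ys" "ys!i = 0"
    using assms(2) by (metis in_set_conv_nth)
  then show ?thesis
    unfolding has_wzs_subseq_def using \<open>a \<in> A\<close> by (intro exI[of _ "{i}"] exI[of _ "\<lambda>_. a"]) simp
qed

lemma has_wzs_subseq_sq_set_star_prime_power:
  fixes p r :: nat and ys :: "nat list"
  assumes p: "prime p" "odd p" and "r \<ge> 1" and "length ys \<ge> 5" and ys: "set ys \<subseteq> {..<p^r}"
  shows "has_wzs_subseq (sq_set_star (p^r)) (p^r) ys"
proof (cases "0 \<in> set ys")
  case True
  have "1 < p^r"
    using prime_gt_1_nat[OF p(1)] \<open>r \<ge> 1\<close> by (intro one_less_power) auto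
  then show ?thesis
    using has_wzs_subseq_if_zero_mem one_mem_sq_set_star True by blast
next
  case False
  define v where "v i = multiplicity p (ys!i)" for i
  define u where "u i = ys!i div p^v i" for i
  have "ys!i = p^v i * u i \<and> v i < r \<and> \<not> p dvd u i" if "i < length ys" for i
  proof -
    have "ys!i \<in> set ys"
      using that by simp
    then have "ys!i \<noteq> 0"
      using False by metis
    moreover have "ys!i < p^r"
      using ys \<open>ys!i \<in> set ys\<close> by auto
    moreover have "\<not> is_unit p"
      using prime_gt_1_nat[OF p(1)] by simp
    ultimately show ?thesis
      unfolding u_def v_def
      using multiplicity_dvd[of p "ys!i"] multiplicity_decompose[of "ys!i" p]
        multiplicity_less_if_less_power[OF p(1), of "ys!i" r]
      by simp
  qed
  moreover obtain T where "T \<subseteq> {..<length ys}" "card T = 3"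
      "\<forall>i\<in>T. \<forall>j\<in>T. even (v i) = even (v j)"
    using obtain_three_same_parity[of "{..<length ys}"] \<open>length ys \<ge> 5\<close> by auto
  ultimately show ?thesis
    using has_wzs_subseq_of_three_same_parity[OF p \<open>r \<ge> 1\<close>] by blast
qed

lemma davenport_w_le:
  assumes "t \<ge> 1" and "\<And>ys. length ys = t \<Longrightarrow> set ys \<subseteq> {..<m} \<Longrightarrow> has_wzs_subseq A m ys"
  shows "davenport_w A m \<le> t"
  unfolding davenport_w_def by (rule Least_le) (use assms in blast)

text \<open>The argument only needs r \<ge> 1.\<close>

theorem mainTheorem14:
  fixes p r :: nat
  assumes "prime p" and "odd p" and "r \<ge> 2" and "even r"
  shows "davenport_w (sq_set_star (p ^ r)) (p ^ r) \<le> 5"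
proof (rule davenport_w_le)
  fix ys :: "nat list"
  assume "length ys = 5" and "set ys \<subseteq> {..<p^r}"
  then show "has_wzs_subseq (sq_set_star (p^r)) (p^r) ys"
    using assms by (intro has_wzs_subseq_sq_set_star_prime_power) auto
qed simp

end
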